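(* Let $H$ be a pointed Hopf algebra and let $Q$ be the Ext-quiver of $\mathcal{M}^H$. Then at each vertex $v$ of $Q$, the number of arrows ending at $v$ equals the number of arrows starting at $v$.
   Context: The Ext-quiver of $\mathcal{M}^H$ has vertex set $G(H)$ and $\dim P(g,h)/\mathbb{K}(g-h)$ arrows $g\to h$, where $P(g,h)=\{x\in H:\Delta(x)=g\otimes x+x\otimes h\}$. *)

theory Defs
  imports "HOL-Library.Poly_Mapping" "HOL-Library.Equipollence"
begin

text \<open>Vector spaces over a field 'k are modelled as free vector spaces
  of finitely supported functions on a basis type 'b; every vector
  space is of this form.  Linear maps are given by their values on basis vectors.\<close>

definition smul :: "'k::field \<Rightarrow> ('b \<Rightarrow>\<^sub>0 'k) \<Rightarrow> ('b \<Rightarrow>\<^sub>0 'k)" where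
  "smul c x = Poly_Mapping.map (\<lambda>a. c * a) x"

definition bv :: "'b \<Rightarrow> ('b \<Rightarrow>\<^sub>0 'k::field)" where
  "bv b = Poly_Mapping.single b 1"

definition lext :: "('b \<Rightarrow> ('c \<Rightarrow>\<^sub>0 'k::field)) \<Rightarrow> ('b \<Rightarrow>\<^sub>0 'k) \<Rightarrow> ('c \<Rightarrow>\<^sub>0 'k)" where
  "lext f x = (\<Sum>b\<in>Poly_Mapping.keys x. smul (Poly_Mapping.lookup x b) (f b))"

definition lfun :: "('b \<Rightarrow> 'k::field) \<Rightarrow> ('b \<Rightarrow>\<^sub>0 'k) \<Rightarrow> 'k" where
  "lfun f x = (\<Sum>b\<in>Poly_Mapping.keys x. Poly_Mapping.lookup x b * f b)"

definition tens :: "('b \<Rightarrow>\<^sub>0 'k::field) \<Rightarrow> ('c \<Rightarrow>\<^sub>0 'k) \<Rightarrow> ('b \<times> 'c \<Rightarrow>\<^sub>0 'k)" where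
  "tens x y = (\<Sum>a\<in>Poly_Mapping.keys x. \<Sum>b\<in>Poly_Mapping.keys y. Poly_Mapping.single (a, b) (Poly_Mapping.lookup x a * Poly_Mapping.lookup y b))"

definition tmap :: "('a \<Rightarrow> ('c \<Rightarrow>\<^sub>0 'k::field)) \<Rightarrow> ('b \<Rightarrow> ('d \<Rightarrow>\<^sub>0 'k))
    \<Rightarrow> ('a \<times> 'b \<Rightarrow>\<^sub>0 'k) \<Rightarrow> ('c \<times> 'd \<Rightarrow>\<^sub>0 'k)" where
  "tmap f g = lext (\<lambda>(a, b). tens (f a) (g b))"

definition bilin :: "('a \<Rightarrow> 'b \<Rightarrow> ('c \<Rightarrow>\<^sub>0 'k::field)) \<Rightarrow> ('a \<Rightarrow>\<^sub>0 'k) \<Rightarrow> ('b \<Rightarrow>\<^sub>0 'k) \<Rightarrow> ('c \<Rightarrow>\<^sub>0 'k)" where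
  "bilin m x y = (\<Sum>a\<in>Poly_Mapping.keys x. \<Sum>b\<in>Poly_Mapping.keys y. smul (Poly_Mapping.lookup x a * Poly_Mapping.lookup y b) (m a b))"

text \<open>Hopf algebra structure on H: multiplication mu (on basis pairs),
  unit element u, comultiplication D (on basis), counit eps (on basis), antipode S (on basis).\<close>
definition hopf_algebra ::
  "('b \<Rightarrow> 'b \<Rightarrow> ('b \<Rightarrow>\<^sub>0 'k::field)) \<Rightarrow> ('b \<Rightarrow>\<^sub>0 'k) \<Rightarrow> ('b \<Rightarrow> ('b \<times> 'b \<Rightarrow>\<^sub>0 'k))
     \<Rightarrow> ('b \<Rightarrow> 'k) \<Rightarrow> ('b \<Rightarrow> ('b \<Rightarrow>\<^sub>0 'k)) \<Rightarrow> bool" where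
  "hopf_algebra mu u D eps S \<longleftrightarrow>
     (\<forall>a b c. bilin mu (bilin mu (bv a) (bv b)) (bv c) = bilin mu (bv a) (bilin mu (bv b) (bv c)))
   \<and> (\<forall>a. bilin mu u (bv a) = bv a \<and> bilin mu (bv a) u = bv a)
   \<and> (\<forall>a. lext (\<lambda>((x, y), z). bv (x, (y, z))) (tmap D bv (D a)) = tmap bv D (D a))
   \<and> (\<forall>a. lext (\<lambda>(x, y). smul (eps x) (bv y)) (D a) = bv a
         \<and> lext (\<lambda>(x, y). smul (eps y) (bv x)) (D a) = bv a)
   \<and> (\<forall>a b. lext D (bilin mu (bv a) (bv b))
            = bilin (\<lambda>(a1, a2) (b1, b2). tens (mu a1 b1) (mu a2 b2)) (D a) (D b))
   \<and> lext D u = tens u u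
   \<and> (\<forall>a b. lfun eps (bilin mu (bv a) (bv b)) = eps a * eps b)
   \<and> lfun eps u = 1
   \<and> (\<forall>a. lext (\<lambda>(x, y). bilin mu (S x) (bv y)) (D a) = smul (eps a) u
         \<and> lext (\<lambda>(x, y). bilin mu (bv x) (S y)) (D a) = smul (eps a) u)"

definition subspace :: "('b \<Rightarrow>\<^sub>0 'k::field) set \<Rightarrow> bool" where
  "subspace C \<longleftrightarrow> 0 \<in> C \<and> (\<forall>x\<in>C. \<forall>y\<in>C. x + y \<in> C) \<and> (\<forall>c. \<forall>x\<in>C. smul c x \<in> C)"

definition tensor_span :: "('b \<Rightarrow>\<^sub>0 'k::field) set \<Rightarrow> ('b \<times> 'b \<Rightarrow>\<^sub>0 'k) set" where
  "tensor_span C = {\<Sum>i<n. tens (x i) (y i) | (n::nat) x y. \<forall>i<n. x i \<in> C \<and> y i \<in> C}"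

definition subcoalgebra :: "('b \<Rightarrow> ('b \<times> 'b \<Rightarrow>\<^sub>0 'k::field)) \<Rightarrow> ('b \<Rightarrow>\<^sub>0 'k) set \<Rightarrow> bool" where
  "subcoalgebra D C \<longleftrightarrow> subspace C \<and> (\<forall>x\<in>C. lext D x \<in> tensor_span C)"

definition simple_subcoalgebra :: "('b \<Rightarrow> ('b \<times> 'b \<Rightarrow>\<^sub>0 'k::field)) \<Rightarrow> ('b \<Rightarrow>\<^sub>0 'k) set \<Rightarrow> bool" where
  "simple_subcoalgebra D C \<longleftrightarrow> subcoalgebra D C \<and> C \<noteq> {0}
     \<and> (\<forall>C'. subcoalgebra D C' \<and> C' \<subseteq> C \<longrightarrow> C' = {0} \<or> C' = C)"

definition pointed :: "('b \<Rightarrow> ('b \<times> 'b \<Rightarrow>\<^sub>0 'k::field)) \<Rightarrow> bool" where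
  "pointed D \<longleftrightarrow> (\<forall>C. simple_subcoalgebra D C \<longrightarrow> (\<exists>v. v \<noteq> 0 \<and> C = range (\<lambda>c. smul c v)))"

definition grouplikes :: "('b \<Rightarrow> ('b \<times> 'b \<Rightarrow>\<^sub>0 'k::field)) \<Rightarrow> ('b \<Rightarrow>\<^sub>0 'k) set" where
  "grouplikes D = {g. g \<noteq> 0 \<and> lext D g = tens g g}"

definition skew_prim :: "('b \<Rightarrow> ('b \<times> 'b \<Rightarrow>\<^sub>0 'k::field)) \<Rightarrow> ('b \<Rightarrow>\<^sub>0 'k) \<Rightarrow> ('b \<Rightarrow>\<^sub>0 'k)
     \<Rightarrow> ('b \<Rightarrow>\<^sub>0 'k) set" where
  "skew_prim D g h = {x. lext D x = tens g x + tens x h}"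

text \<open>B \<subseteq> P(g,h) maps bijectively onto a basis of P(g,h)/K(g-h); so the number of
  arrows g \<rightarrow> h of the Ext-quiver is the cardinality of B.\<close>
definition quot_basis :: "('b \<Rightarrow> ('b \<times> 'b \<Rightarrow>\<^sub>0 'k::field)) \<Rightarrow> ('b \<Rightarrow>\<^sub>0 'k) \<Rightarrow> ('b \<Rightarrow>\<^sub>0 'k)
     \<Rightarrow> ('b \<Rightarrow>\<^sub>0 'k) set \<Rightarrow> bool" where
  "quot_basis D g h B \<longleftrightarrow> B \<subseteq> skew_prim D g h
     \<and> (\<forall>X c. finite X \<and> X \<subseteq> B \<and> (\<Sum>x\<in>X. smul (c x) x) \<in> range (\<lambda>a. smul a (g - h))
              \<longrightarrow> (\<forall>x\<in>X. c x = 0))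
     \<and> (\<forall>x\<in>skew_prim D g h. \<exists>X c a. finite X \<and> X \<subseteq> B
              \<and> x = smul a (g - h) + (\<Sum>y\<in>X. smul (c y) y))"

end

theory Submission
  imports Defs "HOL.Vector_Spaces"
begin

text \<open>For a group-like a, left multiplication by a is a linear automorphism of H (its inverse is
  left multiplication by S a) that maps P(g,h) onto P(ag,ah) and g - h to ag - ah; hence it carries
  a basis of P(g,h) modulo K(g - h) to a basis of P(ag,ah) modulo K(ag - ah).  With
  a = v g^-1 the arrows g \<rightarrow> v therefore correspond to the arrows v \<rightarrow> v g^-1 v, and
  g \<mapsto> v g^-1 v is an involution of G(H).  Arrow counts are well defined in any dimension,
  because a basis of P(g,h) modulo K(g - h), together with g - h if it is nonzero, is a basis
  of P(g,h).\<close>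

section \<open>Free vector spaces\<close>

lemma lookup_smul [simp]: "Poly_Mapping.lookup (smul c x) k = c * Poly_Mapping.lookup x k"
  unfolding smul_def by transfer (simp add: when_def)

interpretation vs: vector_space "smul :: 'k::field \<Rightarrow> ('b \<Rightarrow>\<^sub>0 'k) \<Rightarrow> _"
  by unfold_locales (auto intro!: poly_mapping_eqI simp: lookup_add algebra_simps)

interpretation vs2: vector_space_pair "smul :: 'k::field \<Rightarrow> ('b \<Rightarrow>\<^sub>0 'k) \<Rightarrow> _"
    "smul :: 'k \<Rightarrow> ('c \<Rightarrow>\<^sub>0 'k) \<Rightarrow> _" ..

abbreviation lin :: "(('b \<Rightarrow>\<^sub>0 'k::field) \<Rightarrow> ('c \<Rightarrow>\<^sub>0 'k)) \<Rightarrow> bool" where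
  "lin \<equiv> Vector_Spaces.linear smul smul"

lemma linI:
  assumes "\<And>x y. f (x + y) = f x + f y" and "\<And>c x. f (smul c x) = smul c (f x)"
  shows "lin f"
  using assms by (simp add: linear_iff vs.vector_space_axioms)

lemma sum_keys_smul_bv: "(\<Sum>b\<in>Poly_Mapping.keys x. smul (Poly_Mapping.lookup x b) (bv b)) = x"
  by (rule poly_mapping_eqI)
    (simp add: lookup_sum bv_def lookup_single when_def if_distrib[of "(*) _"] sum.delta' in_keys_iff
      cong: if_cong)

lemma bv_induct [case_names bv add smul]:
  fixes x :: "'b \<Rightarrow>\<^sub>0 'k::field"
  assumes bv: "\<And>b. P (bv b)"
    and add: "\<And>x y. P x \<Longrightarrow> P y \<Longrightarrow> P (x + y)"
    and smul: "\<And>c x. P x \<Longrightarrow> P (smul c x)"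
  shows "P x"
proof -
  have "P 0"
    using smul[OF bv, of 0] by simp
  have "P (\<Sum>b\<in>A. smul (Poly_Mapping.lookup x b) (bv b))" if "finite A" for A
    using that by induct (simp_all add: \<open>P 0\<close> add smul bv)
  then show "P x"
    using sum_keys_smul_bv[of x] by (metis finite_keys)
qed

lemma lext_superset:
  assumes "finite A" and "Poly_Mapping.keys x \<subseteq> A"
  shows "lext f x = (\<Sum>b\<in>A. smul (Poly_Mapping.lookup x b) (f b))"
  unfolding lext_def
  by (rule sum.mono_neutral_left) (use assms in \<open>auto simp: in_keys_iff\<close>)

lemma linear_lext: "lin (lext (f :: 'b \<Rightarrow> ('c \<Rightarrow>\<^sub>0 'k::field)))"
proof (rule linI)
  fix x y :: "'b \<Rightarrow>\<^sub>0 'k"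
  let ?A = "Poly_Mapping.keys x \<union> Poly_Mapping.keys y"
  show "lext f (x + y) = lext f x + lext f y"
    by (simp add: lext_superset[of ?A] keys_add lookup_add vs.scale_left_distrib sum.distrib)
next
  fix c and x :: "'b \<Rightarrow>\<^sub>0 'k"
  have keys: "Poly_Mapping.keys (smul c x) \<subseteq> Poly_Mapping.keys x"
    by (auto simp: in_keys_iff)
  show "lext f (smul c x) = smul c (lext f x)"
    unfolding lext_superset[OF finite_keys keys] by (simp add: lext_def vs.scale_sum_right)
qed

lemmas lext_add [simp] = vs2.linear_add[OF linear_lext]
  and lext_diff [simp] = vs2.linear_diff[OF linear_lext]
  and lext_smul [simp] = vs2.linear_scale[OF linear_lext]

lemma lext_bv [simp]: "lext f (bv b) = f b"
  by (simp add: lext_def bv_def)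

lemma bilin_eq_lext_left: "bilin m x y = lext (\<lambda>a. lext (m a) y) x"
  by (simp add: bilin_def lext_def vs.scale_sum_right mult.commute)

lemma bilin_eq_lext_right: "bilin m x y = lext (\<lambda>b. lext (\<lambda>a. m a b) x) y"
  unfolding bilin_def lext_def vs.scale_sum_right vs.scale_scale
  by (subst sum.swap) (simp add: mult.commute)

lemma linear_bilin_left: "lin (\<lambda>x. bilin m x y)"
  unfolding bilin_eq_lext_left by (rule linear_lext)

lemma linear_bilin_right: "lin (\<lambda>y. bilin m x y)"
  unfolding bilin_eq_lext_right by (rule linear_lext)

lemmas bilin_add_left [simp] = vs2.linear_add[OF linear_bilin_left]
  and bilin_diff_left [simp] = vs2.linear_diff[OF linear_bilin_left]
  and bilin_smul_left [simp] = vs2.linear_scale[OF linear_bilin_left]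
  and bilin_zero_left [simp] = vs2.linear_0[OF linear_bilin_left]
  and bilin_add_right [simp] = vs2.linear_add[OF linear_bilin_right]
  and bilin_diff_right [simp] = vs2.linear_diff[OF linear_bilin_right]
  and bilin_smul_right [simp] = vs2.linear_scale[OF linear_bilin_right]
  and bilin_zero_right [simp] = vs2.linear_0[OF linear_bilin_right]

lemma bilin_bv [simp]: "bilin m (bv a) (bv b) = m a b"
  by (simp add: bilin_eq_lext_left)

lemma tens_eq_bilin: "tens x y = bilin (\<lambda>a b. bv (a, b)) x y"
  by (simp add: tens_def bilin_def bv_def smul_def)

lemma tens_bv [simp]: "tens (bv a) (bv b) = bv (a, b)"
  by (simp add: tens_eq_bilin)

lemma tens_add_left [simp]: "tens (x + y) z = tens x z + tens y z"
  and tens_diff_left [simp]: "tens (x - y) z = tens x z - tens y z"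
  and tens_smul_left [simp]: "tens (smul c x) z = smul c (tens x z)"
  and tens_add_right [simp]: "tens z (x + y) = tens z x + tens z y"
  and tens_diff_right [simp]: "tens z (x - y) = tens z x - tens z y"
  and tens_smul_right [simp]: "tens z (smul c x) = smul c (tens z x)"
  by (simp_all add: tens_eq_bilin)

lemma lfun_eq_lext: "lfun f x = Poly_Mapping.lookup (lext (\<lambda>b. Poly_Mapping.single () (f b)) x) ()"
  by (simp add: lfun_def lext_def lookup_sum)

lemma lfun_add [simp]: "lfun f (x + y) = lfun f x + lfun f y"
  and lfun_smul [simp]: "lfun f (smul c x) = c * lfun f x"
  by (simp_all add: lfun_eq_lext lookup_add)

lemma lfun_bv [simp]: "lfun f (bv b) = f b"
  by (simp add: lfun_def bv_def)

section \<open>Bases of P(g,h) modulo g - h\<close>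

lemma
  fixes B :: "('b \<Rightarrow>\<^sub>0 'k::field) set"
  assumes "quot_basis D g h B"
  shows quot_basis_subset: "B \<subseteq> skew_prim D g h"
    and quot_basis_coeff_zero: "\<lbrakk>finite X; X \<subseteq> B; (\<Sum>x\<in>X. smul (c x) x) \<in> range (\<lambda>a. smul a (g - h));
           x \<in> X\<rbrakk> \<Longrightarrow> c x = 0"
    and quot_basis_spanning: "x \<in> skew_prim D g h \<Longrightarrow>
           \<exists>X c a. finite X \<and> X \<subseteq> B \<and> x = smul a (g - h) + (\<Sum>y\<in>X. smul (c y) y)"
  using assms unfolding quot_basis_def by simp_all

lemma quot_basisI:
  assumes "B \<subseteq> skew_prim D g h"
    and "\<And>X c x. \<lbrakk>finite X; X \<subseteq> B; (\<Sum>x\<in>X. smul (c x) x) \<in> range (\<lambda>a. smul a (g - h));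
           x \<in> X\<rbrakk> \<Longrightarrow> c x = 0"
    and "\<And>x. x \<in> skew_prim D g h \<Longrightarrow>
           \<exists>X c a. finite X \<and> X \<subseteq> B \<and> x = smul a (g - h) + (\<Sum>y\<in>X. smul (c y) y)"
  shows "quot_basis D g h B"
  unfolding quot_basis_def using assms(1) by (intro conjI allI impI ballI assms(3)) (auto intro: assms(2))

lemma quot_basis_diff_notin:
  fixes B :: "('b \<Rightarrow>\<^sub>0 'k::field) set"
  assumes "quot_basis D g h B"
  shows "g - h \<notin> B"
proof
  assume "g - h \<in> B"
  have "(1::'k::field) = 0"
    by (rule quot_basis_coeff_zero[OF assms, where X="{g - h}" and c="\<lambda>_. 1" and x="g - h"])
      (use \<open>g - h \<in> B\<close> in \<open>auto intro: range_eqI[of _ _ 1]\<close>)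
  then show False
    by simp
qed

lemma quot_basis_independent:
  fixes B :: "('b \<Rightarrow>\<^sub>0 'k::field) set"
  assumes qb: "quot_basis D g h B"
  shows "vs.independent (B \<union> ({g - h} - {0}))"
  unfolding vs.independent_explicit_module
proof (intro allI impI)
  let ?w = "g - h"
  fix t c x
  assume t: "finite t" "t \<subseteq> B \<union> ({?w} - {0})" and sum0: "(\<Sum>v\<in>t. smul (c v) v) = 0"
    and x: "x \<in> t"
  define a where "a = (if ?w \<in> t then c ?w else 0)"
  have split: "(\<Sum>v\<in>t. smul (c v) v) = smul a ?w + (\<Sum>v\<in>t - {?w}. smul (c v) v)"
    using t(1) by (cases "?w \<in> t") (simp_all add: a_def sum.remove)
  then have "(\<Sum>v\<in>t - {?w}. smul (c v) v) = smul (- a) ?w"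
    using sum0 by (simp add: vs.scale_minus_left eq_neg_iff_add_eq_0 add.commute)
  then have others: "\<forall>v\<in>t - {?w}. c v = 0"
    using t by (blast intro: quot_basis_coeff_zero[OF qb] range_eqI)
  show "c x = 0"
  proof (cases "x = ?w")
    case True
    with x t(2) quot_basis_diff_notin[OF qb] have "?w \<noteq> 0" and "?w \<in> t"
      by auto
    then have "smul (c ?w) ?w = 0"
      using split sum0 others by (simp add: a_def)
    with \<open>?w \<noteq> 0\<close> True show ?thesis
      by simp
  qed (use others x in blast)
qed

lemma quot_basis_span:
  fixes B :: "('b \<Rightarrow>\<^sub>0 'k::field) set"
  assumes qb: "quot_basis D g h B" and diff: "g - h \<in> skew_prim D g h"
  shows "vs.span (B \<union> ({g - h} - {0})) = vs.span (skew_prim D g h)"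
  unfolding vs.span_eq
proof
  show "B \<union> ({g - h} - {0}) \<subseteq> vs.span (skew_prim D g h)"
    using quot_basis_subset[OF qb] diff vs.span_superset by blast
  show "skew_prim D g h \<subseteq> vs.span (B \<union> ({g - h} - {0}))"
  proof
    fix x assume "x \<in> skew_prim D g h"
    then obtain X c a where X: "finite X" "X \<subseteq> B"
      and x: "x = smul a (g - h) + (\<Sum>y\<in>X. smul (c y) y)"
      using quot_basis_spanning[OF qb] by blast
    have "smul a (g - h) \<in> vs.span (B \<union> ({g - h} - {0}))"
      by (cases "g - h = 0") (auto intro: vs.span_scale vs.span_base vs.span_zero)
    moreover have "(\<Sum>y\<in>X. smul (c y) y) \<in> vs.span (B \<union> ({g - h} - {0}))"
      using X by (intro vs.span_sum vs.span_scale vs.span_base) auto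
    ultimately show "x \<in> vs.span (B \<union> ({g - h} - {0}))"
      unfolding x by (rule vs.span_add)
  qed
qed

lemma quot_basis_eqpoll:
  fixes B :: "('b \<Rightarrow>\<^sub>0 'k::field) set"
  assumes diff: "g - h \<in> skew_prim D g h"
    and qb: "quot_basis D g h B" and qb': "quot_basis D g h B'"
  shows "B \<approx> B'"
proof -
  have "B \<union> ({g - h} - {0}) \<approx> B' \<union> ({g - h} - {0})"
    using vs.bij_if_span_eq_span_bases[OF quot_basis_independent[OF qb] quot_basis_independent[OF qb']]
    by (simp add: quot_basis_span[OF qb diff] quot_basis_span[OF qb' diff] eqpoll_def)
  then show ?thesis
    using insert_eqpoll_insertD quot_basis_diff_notin[OF qb] quot_basis_diff_notin[OF qb']
    by (cases "g - h = 0") auto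
qed

lemma quot_basis_image:
  fixes B :: "('b \<Rightarrow>\<^sub>0 'k::field) set"
  assumes qb: "quot_basis D g h B"
    and L: "lin L" and "inj L"
    and P: "L ` skew_prim D g h = skew_prim D g' h'"
    and diff: "L (g - h) = g' - h'"
  shows "quot_basis D g' h' (L ` B)"
proof (rule quot_basisI)
  show "L ` B \<subseteq> skew_prim D g' h'"
    using quot_basis_subset[OF qb] P by blast
next
  fix X c x
  assume "finite X" and "X \<subseteq> L ` B" and x: "x \<in> X"
    and "(\<Sum>x\<in>X. smul (c x) x) \<in> range (\<lambda>a. smul a (g' - h'))"
  from this(4) obtain a where a: "(\<Sum>x\<in>X. smul (c x) x) = smul a (g' - h')"
    by blast
  obtain Y where Y: "Y \<subseteq> B" "X = L ` Y"
    using \<open>X \<subseteq> L ` B\<close> by (meson subset_image_iff)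
  have inj: "inj_on L Y"
    using \<open>inj L\<close> by (rule inj_on_subset) simp
  have "L (\<Sum>y\<in>Y. smul (c (L y)) y) = L (smul a (g - h))"
    using a by (simp add: Y sum.reindex[OF inj] vs2.linear_sum[OF L] vs2.linear_scale[OF L] diff)
  then have "(\<Sum>y\<in>Y. smul (c (L y)) y) \<in> range (\<lambda>a. smul a (g - h))"
    using \<open>inj L\<close> by (auto dest: injD)
  moreover have "finite Y"
    using \<open>finite X\<close> Y inj finite_image_iff by blast
  ultimately have "\<forall>y\<in>Y. c (L y) = 0"
    using quot_basis_coeff_zero[OF qb, of Y "\<lambda>y. c (L y)"] Y(1) by blast
  then show "c x = 0"
    using x unfolding Y(2) by blast
next
  fix y assume "y \<in> skew_prim D g' h'"
  then obtain x where "x \<in> skew_prim D g h" and y: "y = L x"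
    using P by blast
  then obtain X c a where X: "finite X" "X \<subseteq> B"
    and x: "x = smul a (g - h) + (\<Sum>z\<in>X. smul (c z) z)"
    using quot_basis_spanning[OF qb] by blast
  have inj: "inj_on L X"
    using \<open>inj L\<close> by (rule inj_on_subset) simp
  have "y = smul a (g' - h') + (\<Sum>z\<in>L ` X. smul (c (inv L z)) z)"
    using \<open>inj L\<close> by (simp add: y x sum.reindex[OF inj] vs2.linear_sum[OF L] vs2.linear_scale[OF L]
        vs2.linear_add[OF L] diff)
  then show "\<exists>X c a. finite X \<and> X \<subseteq> L ` B \<and> y = smul a (g' - h') + (\<Sum>y\<in>X. smul (c y) y)"
    using X by (intro exI[of _ "L ` X"] exI[of _ "\<lambda>z. c (inv L z)"] exI[of _ a]) auto
qed

section \<open>Hopf algebras and their group-likes\<close>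

locale hopf =
  fixes mu :: "'b \<Rightarrow> 'b \<Rightarrow> ('b \<Rightarrow>\<^sub>0 'k::field)"
    and u :: "'b \<Rightarrow>\<^sub>0 'k"
    and D :: "'b \<Rightarrow> ('b \<times> 'b \<Rightarrow>\<^sub>0 'k)"
    and eps :: "'b \<Rightarrow> 'k"
    and S :: "'b \<Rightarrow> ('b \<Rightarrow>\<^sub>0 'k)"
  assumes hopf_algebra: "hopf_algebra mu u D eps S"
begin

abbreviation mul where "mul \<equiv> bilin mu"
abbreviation mul2 where "mul2 \<equiv> bilin (\<lambda>(a1, a2) (b1, b2). tens (mu a1 b1) (mu a2 b2))"
abbreviation comul where "comul \<equiv> lext D"
abbreviation antipode where "antipode \<equiv> lext S"
abbreviation counit where "counit \<equiv> lfun eps"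

lemma mul_assoc_bv: "mul (mu a b) (bv c) = mul (bv a) (mu b c)"
  and mul_unit_bv: "mul u (bv a) = bv a" "mul (bv a) u = bv a"
  and counit_left_bv: "lext (\<lambda>(x, y). smul (eps x) (bv y)) (D a) = bv a"
  and comul_mul_bv: "comul (mu a b) = mul2 (D a) (D b)"
  and comul_unit: "comul u = tens u u"
  and counit_unit: "counit u = 1"
  and antipode_left_bv: "lext (\<lambda>(x, y). mul (S x) (bv y)) (D a) = smul (eps a) u"
  and antipode_right_bv: "lext (\<lambda>(x, y). mul (bv x) (S y)) (D a) = smul (eps a) u"
  using hopf_algebra by (simp_all add: hopf_algebra_def)

lemma mul_assoc: "mul (mul x y) z = mul x (mul y z)"
proof -
  have "mul (mul (bv a) (bv b)) z = mul (bv a) (mul (bv b) z)" for a b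
    by (induct z rule: bv_induct) (simp_all add: mul_assoc_bv)
  then have "mul (mul (bv a) y) z = mul (bv a) (mul y z)" for a
    by (induct y rule: bv_induct) simp_all
  then show ?thesis
    by (induct x rule: bv_induct) simp_all
qed

lemma mul_unit_left [simp]: "mul u x = x"
  and mul_unit_right [simp]: "mul x u = x"
  by (induct x rule: bv_induct) (simp_all add: mul_unit_bv)

lemma comul_mul: "comul (mul x y) = mul2 (comul x) (comul y)"
proof -
  have "comul (mul (bv a) y) = mul2 (D a) (comul y)" for a
    by (induct y rule: bv_induct) (simp_all add: comul_mul_bv)
  then show ?thesis
    by (induct x rule: bv_induct) simp_all
qed

lemma mul2_tens: "mul2 (tens x y) (tens z w) = tens (mul x z) (mul y w)"
proof -
  have "mul2 (tens (bv a) (bv b)) (tens (bv c) (bv d)) = tens (mul (bv a) (bv c)) (mul (bv b) (bv d))"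
    for a b c d by simp
  then have "mul2 (tens (bv a) (bv b)) (tens (bv c) w) = tens (mul (bv a) (bv c)) (mul (bv b) w)"
    for a b c by (induct w rule: bv_induct) simp_all
  then have "mul2 (tens (bv a) (bv b)) (tens z w) = tens (mul (bv a) z) (mul (bv b) w)" for a b
    by (induct z rule: bv_induct) simp_all
  then have "mul2 (tens (bv a) y) (tens z w) = tens (mul (bv a) z) (mul y w)" for a
    by (induct y rule: bv_induct) simp_all
  then show ?thesis
    by (induct x rule: bv_induct) simp_all
qed

lemma mul2_assoc: "mul2 (mul2 X Y) Z = mul2 X (mul2 Y Z)"
proof -
  have tens: "mul2 (mul2 (tens (bv a) (bv b)) (tens (bv c) (bv d))) (tens (bv e) (bv f))
      = mul2 (tens (bv a) (bv b)) (mul2 (tens (bv c) (bv d)) (tens (bv e) (bv f)))" for a b c d e f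
    by (simp only: mul2_tens mul_assoc)
  have "mul2 (mul2 (bv p) (bv q)) (bv r) = mul2 (bv p) (mul2 (bv q) (bv r))" for p q r
    using tens[of "fst p" "snd p" "fst q" "snd q" "fst r" "snd r"] by simp
  then have "mul2 (mul2 (bv p) (bv q)) Z = mul2 (bv p) (mul2 (bv q) Z)" for p q
    by (induct Z rule: bv_induct) simp_all
  then have "mul2 (mul2 (bv p) Y) Z = mul2 (bv p) (mul2 Y Z)" for p
    by (induct Y rule: bv_induct) simp_all
  then show ?thesis
    by (induct X rule: bv_induct) simp_all
qed

lemma mul2_unit_right: "mul2 X (tens u u) = X"
proof (induct X rule: bv_induct)
  case (bv p)
  show ?case
    using mul2_tens[of "bv (fst p)" "bv (snd p)" u u] by simp
qed simp_all

lemma counit_left_tens: "lext (\<lambda>(x, y). smul (eps x) (bv y)) (tens x y) = smul (counit x) y"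
proof (induct x rule: bv_induct)
  case (bv a)
  show ?case
    by (induct y rule: bv_induct) (simp_all add: vs.scale_left_commute vs.scale_right_distrib)
qed (simp_all add: vs.scale_left_distrib)

lemma counit_left_comul: "lext (\<lambda>(x, y). smul (eps x) (bv y)) (comul x) = x"
  by (induct x rule: bv_induct) (simp_all add: counit_left_bv)

lemma antipode_left_tens: "lext (\<lambda>(x, y). mul (S x) (bv y)) (tens x y) = mul (antipode x) y"
proof (induct x rule: bv_induct)
  case (bv a)
  show ?case
    by (induct y rule: bv_induct) simp_all
qed simp_all

lemma antipode_right_tens: "lext (\<lambda>(x, y). mul (bv x) (S y)) (tens x y) = mul x (antipode y)"
proof (induct y rule: bv_induct)
  case (bv b)
  show ?case
    by (induct x rule: bv_induct) simp_all
qed simp_all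

lemma antipode_left_comul: "lext (\<lambda>(x, y). mul (S x) (bv y)) (comul x) = smul (counit x) u"
  by (induct x rule: bv_induct) (simp_all add: antipode_left_bv vs.scale_left_distrib)

lemma antipode_right_comul: "lext (\<lambda>(x, y). mul (bv x) (S y)) (comul x) = smul (counit x) u"
  by (induct x rule: bv_induct) (simp_all add: antipode_right_bv vs.scale_left_distrib)

lemma unit_nonzero: "u \<noteq> 0"
  using counit_unit by (auto simp: lfun_def)

lemma grouplikeD: "g \<in> grouplikes D \<Longrightarrow> g \<noteq> 0" "g \<in> grouplikes D \<Longrightarrow> comul g = tens g g"
  by (simp_all add: grouplikes_def)

lemma counit_grouplike: "g \<in> grouplikes D \<Longrightarrow> counit g = 1"
  using counit_left_comul[of g] vs.scale_cancel_right[of "counit g" g 1]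
  by (simp add: grouplikeD counit_left_tens)

lemma grouplike_antipode_left [simp]: "g \<in> grouplikes D \<Longrightarrow> mul (antipode g) g = u"
  using antipode_left_comul[of g] by (simp add: grouplikeD antipode_left_tens counit_grouplike)

lemma grouplike_antipode_right [simp]: "g \<in> grouplikes D \<Longrightarrow> mul g (antipode g) = u"
  using antipode_right_comul[of g] by (simp add: grouplikeD antipode_right_tens counit_grouplike)

lemma antipode_mul_cancel [simp]: "g \<in> grouplikes D \<Longrightarrow> mul (antipode g) (mul g x) = x"
  by (simp flip: mul_assoc)

lemma mul_antipode_cancel [simp]: "g \<in> grouplikes D \<Longrightarrow> mul g (mul (antipode g) x) = x"
  by (simp flip: mul_assoc)

lemma grouplike_mul:
  assumes "g \<in> grouplikes D" and "h \<in> grouplikes D"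
  shows "mul g h \<in> grouplikes D"
proof -
  have "mul g h \<noteq> 0"
  proof
    assume "mul g h = 0"
    then have "h = 0"
      using antipode_mul_cancel[OF assms(1), of h] by simp
    with assms(2) show False
      using grouplikeD(1) by blast
  qed
  then show ?thesis
    using assms by (simp add: grouplikes_def comul_mul mul2_tens)
qed

lemma grouplike_antipode:
  assumes g: "g \<in> grouplikes D"
  shows "antipode g \<in> grouplikes D"
proof -
  let ?s = "antipode g"
  have "comul ?s = mul2 (comul ?s) (mul2 (tens g g) (tens ?s ?s))"
    using g by (simp add: mul2_tens mul2_unit_right)
  also have "\<dots> = mul2 (mul2 (comul ?s) (comul g)) (tens ?s ?s)"
    using g by (simp add: mul2_assoc grouplikeD)
  also have "\<dots> = mul2 (comul (mul ?s g)) (tens ?s ?s)"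
    by (simp only: comul_mul)
  also have "\<dots> = tens ?s ?s"
    using g by (simp add: comul_unit mul2_tens)
  finally have "comul ?s = tens ?s ?s" .
  moreover have "?s \<noteq> 0"
    using g unit_nonzero grouplike_antipode_left[OF g] by force
  ultimately show ?thesis
    by (simp add: grouplikes_def)
qed

lemma antipode_grouplike_unique:
  assumes "g \<in> grouplikes D" and "mul g h = u"
  shows "antipode g = h"
  using antipode_mul_cancel[of g h] assms by simp

lemma antipode_antipode_grouplike [simp]: "g \<in> grouplikes D \<Longrightarrow> antipode (antipode g) = g"
  by (simp add: antipode_grouplike_unique grouplike_antipode)

lemma antipode_mul_grouplike:
  assumes "g \<in> grouplikes D" and "h \<in> grouplikes D"
  shows "antipode (mul g h) = mul (antipode h) (antipode g)"
  using assms by (intro antipode_grouplike_unique) (simp_all add: grouplike_mul mul_assoc)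

lemma diff_grouplikes_skew_prim:
  "g \<in> grouplikes D \<Longrightarrow> h \<in> grouplikes D \<Longrightarrow> g - h \<in> skew_prim D g h"
  by (simp add: skew_prim_def grouplikeD)

lemma skew_prim_mul_grouplike:
  "a \<in> grouplikes D \<Longrightarrow> x \<in> skew_prim D g h \<Longrightarrow> mul a x \<in> skew_prim D (mul a g) (mul a h)"
  by (simp add: skew_prim_def comul_mul grouplikeD mul2_tens)

lemma quot_basis_mul_grouplike:
  assumes a: "a \<in> grouplikes D" and qb: "quot_basis D g h B"
  shows "quot_basis D (mul a g) (mul a h) (mul a ` B)"
proof (rule quot_basis_image[OF qb linear_bilin_right])
  show "inj (mul a)"
    by (metis a antipode_mul_cancel injI)
  show "mul a ` skew_prim D g h = skew_prim D (mul a g) (mul a h)"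
  proof
    show "mul a ` skew_prim D g h \<subseteq> skew_prim D (mul a g) (mul a h)"
      using a skew_prim_mul_grouplike by blast
    show "skew_prim D (mul a g) (mul a h) \<subseteq> mul a ` skew_prim D g h"
    proof
      fix y assume "y \<in> skew_prim D (mul a g) (mul a h)"
      then have "mul (antipode a) y \<in> skew_prim D g h"
        using skew_prim_mul_grouplike[OF grouplike_antipode[OF a]] a by fastforce
      then show "y \<in> mul a ` skew_prim D g h"
        using a by (auto intro: image_eqI[of _ _ "mul (antipode a) y"])
    qed
  qed
qed simp

lemma bij_betw_grouplike_reflection:
  assumes v: "v \<in> grouplikes D"
  shows "bij_betw (\<lambda>g. mul (mul v (antipode g)) v) (grouplikes D) (grouplikes D)"
proof -
  let ?c = "\<lambda>g. mul (mul v (antipode g)) v"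
  have closed: "?c ` grouplikes D \<subseteq> grouplikes D"
    using v by (auto intro: grouplike_mul grouplike_antipode)
  have involution: "\<forall>g\<in>grouplikes D. ?c (?c g) = g"
    using v by (simp add: antipode_mul_grouplike grouplike_mul grouplike_antipode mul_assoc)
  show ?thesis
    using bij_betw_byWitness[OF involution involution closed closed] .
qed

lemma arrows_in_eqpoll_arrows_out:
  assumes v: "v \<in> grouplikes D" and g: "g \<in> grouplikes D"
    and qb_in: "quot_basis D g v B" and qb_out: "quot_basis D v (mul (mul v (antipode g)) v) B'"
  shows "B \<approx> B'"
proof -
  let ?a = "mul v (antipode g)"
  have a: "?a \<in> grouplikes D"
    using v g by (intro grouplike_mul grouplike_antipode)
  have "quot_basis D (mul ?a g) (mul ?a v) (mul ?a ` B)"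
    by (rule quot_basis_mul_grouplike[OF a qb_in])
  then have "quot_basis D v (mul ?a v) (mul ?a ` B)"
    using g by (simp add: mul_assoc)
  then have "mul ?a ` B \<approx> B'"
    using quot_basis_eqpoll[OF diff_grouplikes_skew_prim[OF v grouplike_mul[OF a v]]] qb_out by blast
  moreover have "inj_on (mul ?a) B"
    by (metis a antipode_mul_cancel inj_onI)
  ultimately show ?thesis
    using eqpoll_sym eqpoll_trans inj_on_image_eqpoll_self by blast
qed

end

theorem lemma4p3:
  fixes mu :: "'b \<Rightarrow> 'b \<Rightarrow> ('b \<Rightarrow>\<^sub>0 'k::field)"
    and u :: "'b \<Rightarrow>\<^sub>0 'k"
    and D :: "'b \<Rightarrow> ('b \<times> 'b \<Rightarrow>\<^sub>0 'k)"
    and eps :: "'b \<Rightarrow> 'k"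
    and S :: "'b \<Rightarrow> ('b \<Rightarrow>\<^sub>0 'k)"
    and B :: "('b \<Rightarrow>\<^sub>0 'k) \<Rightarrow> ('b \<Rightarrow>\<^sub>0 'k) \<Rightarrow> ('b \<Rightarrow>\<^sub>0 'k) set"
    and v :: "'b \<Rightarrow>\<^sub>0 'k"
  assumes "hopf_algebra mu u D eps S"
    and "pointed D"
    and "\<forall>g\<in>grouplikes D. \<forall>h\<in>grouplikes D. quot_basis D g h (B g h)"
    and "v \<in> grouplikes D"
  shows "Sigma (grouplikes D) (\<lambda>g. B g v) \<approx> Sigma (grouplikes D) (\<lambda>h. B v h)"
proof -
  interpret hopf mu u D eps S
    by (rule hopf.intro) (fact assms(1))
  show ?thesis
  proof (rule Sigma_eqpoll_cong[OF bij_betw_grouplike_reflection[OF assms(4)]])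
    fix g assume g: "g \<in> grouplikes D"
    let ?g' = "mul (mul v (antipode g)) v"
    have "?g' \<in> grouplikes D"
      using g assms(4) by (intro grouplike_mul grouplike_antipode)
    then show "B g v \<approx> B v ?g'"
      using assms(3,4) g by (intro arrows_in_eqpoll_arrows_out[OF assms(4) g]) auto
  qed
qed

end
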